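(* Let $0<p<\infty$, $m\in\mathbb{N}$, and let $E_1,\dots,E_m,F$ be Banach spaces over $\mathbb{K}=\mathbb{R}$ or $\mathbb{C}$. Then $$\eta^{m\text{-}mult}_{(p,p)}(E_1,\dots,E_m;F)\le \frac mp \ \text{ if } 0<p\le 2,\qquad \eta^{m\text{-}mult}_{(p,p)}(E_1,\dots,E_m;F)\le \frac m2 \ \text{ if } p\ge 2.$$
   Context: For vectors $x_1,\dots,x_n$ in a Banach space $E$ and $q>0$, $\|(x_k)_{k=1}^n\|_{w,q}:=\sup_{\varphi\in B_{E^*}}\left(\sum_{k=1}^n|\varphi(x_k)|^q\right)^{1/q}$, where $B_{E^*}$ is the closed unit ball of the dual. $\mathcal{L}(E_1,\dots,E_m;F)$ is the space of bounded $m$-linear maps. For $p,q>0$, the multilinear $m$-index of $(p,q)$-summability $\eta^{m\text{-}mult}_{(p,q)}(E_1,\dots,E_m;F)$ is the infimum of all real numbers $s$ with the property: for every $T\in\mathcal{L}(E_1,\dots,E_m;F)$ there is a constant $C\ge0$ (depending only on $m$ and $T$) such that $$\left(\sum_{k_1,\dots,k_m=1}^n\|T(x^{(1)}_{k_1},\dots,x^{(m)}_{k_m})\|^p\right)^{1/p}\le C n^{s}\prod_{i=1}^m\|(x^{(i)}_{k})_{k=1}^n\|_{w,q}$$ for all positive integers $n$ and all $x^{(i)}_k\in E_i$, $1\le k\le n$, $1\le i\le m$. *)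

theory Defs
  imports "HOL-Analysis.Analysis"
begin

text \<open>A scalar multiplication by the field K (K = real or complex) on a real Banach
  space, compatible with the real structure and the norm: this makes the space a
  Banach space over K.\<close>
definition K_scaling :: "('k::real_normed_field \<Rightarrow> 'v::real_normed_vector \<Rightarrow> 'v) \<Rightarrow> bool" where
  "K_scaling sc \<longleftrightarrow>
     (\<forall>a b x. sc (a + b) x = sc a x + sc b x) \<and>
     (\<forall>a x y. sc a (x + y) = sc a x + sc a y) \<and>
     (\<forall>a b x. sc (a * b) x = sc a (sc b x)) \<and>
     (\<forall>r x. sc (of_real r) x = r *\<^sub>R x) \<and>
     (\<forall>a x. norm (sc a x) = norm a * norm x)"

text \<open>A closed K-linear subspace (hence itself a Banach space over K).\<close>
definition K_subspace :: "('k::real_normed_field \<Rightarrow> 'v::real_normed_vector \<Rightarrow> 'v) \<Rightarrow> 'v set \<Rightarrow> bool" where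
  "K_subspace sc S \<longleftrightarrow> 0 \<in> S \<and> (\<forall>x\<in>S. \<forall>y\<in>S. x + y \<in> S) \<and>
     (\<forall>a. \<forall>x\<in>S. sc a x \<in> S) \<and> closed S"

definition dual_ball :: "('k::real_normed_field \<Rightarrow> 'v::real_normed_vector \<Rightarrow> 'v) \<Rightarrow> 'v set \<Rightarrow> ('v \<Rightarrow> 'k) set" where
  "dual_ball sc S = {\<phi>. (\<forall>x\<in>S. \<forall>y\<in>S. \<phi> (x + y) = \<phi> x + \<phi> y) \<and>
     (\<forall>a. \<forall>x\<in>S. \<phi> (sc a x) = a * \<phi> x) \<and> (\<forall>x\<in>S. norm (\<phi> x) \<le> norm x)}"

definition weak_norm :: "('k::real_normed_field \<Rightarrow> 'v::real_normed_vector \<Rightarrow> 'v) \<Rightarrow> 'v set \<Rightarrow> real \<Rightarrow> nat \<Rightarrow> (nat \<Rightarrow> 'v) \<Rightarrow> real" where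
  "weak_norm sc S q n x = (SUP \<phi>\<in>dual_ball sc S. (\<Sum>k\<in>{1..n}. norm (\<phi> (x k)) powr q) powr (1 / q))"

text \<open>Arguments of an m-linear map: only the first m coordinates matter.\<close>
definition args :: "nat \<Rightarrow> (nat \<Rightarrow> 'v::zero) \<Rightarrow> nat \<Rightarrow> 'v" where
  "args m x = (\<lambda>i. if i < m then x i else 0)"

definition mult_bounded ::
  "('k::real_normed_field \<Rightarrow> 'e::real_normed_vector \<Rightarrow> 'e) \<Rightarrow> ('k \<Rightarrow> 'f::real_normed_vector \<Rightarrow> 'f)
   \<Rightarrow> nat \<Rightarrow> (nat \<Rightarrow> 'e set) \<Rightarrow> ((nat \<Rightarrow> 'e) \<Rightarrow> 'f) \<Rightarrow> bool" where
  "mult_bounded scE scF m S T \<longleftrightarrow>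
     (\<forall>i<m. \<forall>x. (\<forall>j<m. x j \<in> S j) \<longrightarrow>
        (\<forall>y\<in>S i. \<forall>z\<in>S i. T (args m (x(i := y + z))) = T (args m (x(i := y))) + T (args m (x(i := z)))) \<and>
        (\<forall>a. \<forall>y\<in>S i. T (args m (x(i := scE a y))) = scF a (T (args m (x(i := y))))))
     \<and> (\<exists>C. \<forall>x. (\<forall>j<m. x j \<in> S j) \<longrightarrow> norm (T (args m x)) \<le> C * (\<Prod>j<m. norm (x j)))"

definition mult_index ::
  "('k::real_normed_field \<Rightarrow> 'e::real_normed_vector \<Rightarrow> 'e) \<Rightarrow> ('k \<Rightarrow> 'f::real_normed_vector \<Rightarrow> 'f)
   \<Rightarrow> nat \<Rightarrow> (nat \<Rightarrow> 'e set) \<Rightarrow> real \<Rightarrow> real \<Rightarrow> ereal" where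
  "mult_index scE scF m S p q = Inf (ereal ` {s. \<forall>T. mult_bounded scE scF m S T \<longrightarrow>
     (\<exists>C\<ge>0. \<forall>n\<ge>1. \<forall>x::nat \<Rightarrow> nat \<Rightarrow> 'e. (\<forall>i<m. \<forall>k\<in>{1..n}. x i k \<in> S i) \<longrightarrow>
        (\<Sum>k\<in>PiE {..<m} (\<lambda>_. {1..n}). norm (T (args m (\<lambda>i. x i (k i)))) powr p) powr (1 / p)
          \<le> C * real n powr s * (\<Prod>i<m. weak_norm scE (S i) q n (x i)))})"

end

theory Submission
  imports Defs
begin

text \<open>The bound \<open>m/p\<close> is the trivial one. By Hahn-Banach every vector of \<open>E\<^sub>i\<close> is
  normed by a functional in the dual unit ball, so every term of a sequence has norm at most
  the weak \<open>p\<close>-norm of the sequence. Hence each of the \<open>n\<^sup>m\<close> terms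
  \<open>\<parallel>T(x\<^sup>1\<^sub>k\<^sub>1, \<dots>, x\<^sup>m\<^sub>k\<^sub>m)\<parallel>\<close> is at most \<open>C\<close> times the product \<open>w\<close> of the \<open>m\<close> weak
  \<open>p\<close>-norms, and the \<open>p\<close>-th root of the sum of their \<open>p\<close>-th powers is at most
  \<open>C n\<^bsup>m/p\<^esup> w\<close>. For \<open>p \<ge> 2\<close> this also gives \<open>m/2\<close>, since then \<open>m/p \<le> m/2\<close>.
  Hahn-Banach is obtained from Zorn's lemma on graphs of norm-dominated functionals; in the
  complex case a real norming functional \<open>u\<close> is complexified to \<open>u w - \<i> u (\<i> w)\<close>.\<close>

text \<open>A linear subspace of \<open>V \<times> \<real>\<close> lying below the graph of the norm; by
  \<open>norm_dominated_graph_unique\<close> it is the graph of a norm-dominated linear functional.\<close>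
definition norm_dominated_graph :: "'v::real_normed_vector set \<Rightarrow> ('v \<times> real) set \<Rightarrow> bool" where
  "norm_dominated_graph S G \<longleftrightarrow> G \<subseteq> S \<times> UNIV \<and>
     (\<forall>a b c d. (a, b) \<in> G \<longrightarrow> (c, d) \<in> G \<longrightarrow> (a + c, b + d) \<in> G) \<and>
     (\<forall>r a b. (a, b) \<in> G \<longrightarrow> (r *\<^sub>R a, r * b) \<in> G) \<and>
     (\<forall>a b. (a, b) \<in> G \<longrightarrow> b \<le> norm a)"

definition graph_extend :: "('v::real_vector \<times> real) set \<Rightarrow> 'v \<Rightarrow> real \<Rightarrow> ('v \<times> real) set" where
  "graph_extend G z c = {(a + t *\<^sub>R z, b + t * c) | a b t. (a, b) \<in> G}"

lemma
  assumes "norm_dominated_graph S G"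
  shows norm_dominated_graph_subset: "G \<subseteq> S \<times> UNIV"
    and norm_dominated_graph_add: "(a, b) \<in> G \<Longrightarrow> (c, d) \<in> G \<Longrightarrow> (a + c, b + d) \<in> G"
    and norm_dominated_graph_scale: "(a, b) \<in> G \<Longrightarrow> (r *\<^sub>R a, r * b) \<in> G"
    and norm_dominated_graph_le_norm: "(a, b) \<in> G \<Longrightarrow> b \<le> norm a"
  using assms unfolding norm_dominated_graph_def by blast+

lemma norm_dominated_graph_zero:
  assumes "norm_dominated_graph S G" "(a, b) \<in> G"
  shows "(0, 0) \<in> G"
  using norm_dominated_graph_scale[OF assms, of 0] by simp

lemma norm_dominated_graph_unique:
  assumes G: "norm_dominated_graph S G" and "(y, b) \<in> G" "(y, b') \<in> G"
  shows "b = b'"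
proof -
  have "(y + (-1) *\<^sub>R y, b + (-1) * b') \<in> G" "(y + (-1) *\<^sub>R y, b' + (-1) * b) \<in> G"
    using assms by (blast intro: norm_dominated_graph_add norm_dominated_graph_scale)+
  then have "b - b' \<le> 0" "b' - b \<le> 0"
    using norm_dominated_graph_le_norm[OF G] by fastforce+
  then show ?thesis by simp
qed

text \<open>The admissible values \<open>c\<close> on a new direction \<open>z\<close> in the one-step Hahn-Banach
  extension form a nonempty interval, by the triangle inequality.\<close>
lemma norm_dominated_graph_extension_value:
  assumes G: "norm_dominated_graph S G" and "G \<noteq> {}"
  obtains c where "\<And>a b. (a, b) \<in> G \<Longrightarrow> b - norm (a - z) \<le> c"
    and "\<And>a b. (a, b) \<in> G \<Longrightarrow> c \<le> norm (a + z) - b"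
proof
  define L where "L = {b - norm (a - z) | a b. (a, b) \<in> G}"
  have sep: "b - norm (a - z) \<le> norm (a' + z) - b'" if "(a, b) \<in> G" "(a', b') \<in> G" for a b a' b'
  proof -
    have "b + b' \<le> norm ((a - z) + (a' + z))"
      using norm_dominated_graph_le_norm[OF G norm_dominated_graph_add[OF G that]] by simp
    also have "\<dots> \<le> norm (a - z) + norm (a' + z)" by (rule norm_triangle_ineq)
    finally show ?thesis by simp
  qed
  have "L \<noteq> {}" using \<open>G \<noteq> {}\<close> by (auto simp: L_def)
  moreover have "bdd_above L"
    using \<open>G \<noteq> {}\<close> sep unfolding L_def bdd_above_def by fast
  ultimately show "b - norm (a - z) \<le> Sup L" "Sup L \<le> norm (a + z) - b" if "(a, b) \<in> G" for a b
    using that sep by (auto simp: L_def intro!: cSup_upper cSup_least)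
qed

lemma norm_dominated_graph_extend:
  assumes G: "norm_dominated_graph S G" and S: "subspace S" "z \<in> S"
    and lower: "\<And>a b. (a, b) \<in> G \<Longrightarrow> b - norm (a - z) \<le> c"
    and upper: "\<And>a b. (a, b) \<in> G \<Longrightarrow> c \<le> norm (a + z) - b"
  shows "norm_dominated_graph S (graph_extend G z c)"
  unfolding norm_dominated_graph_def
proof (intro conjI allI impI)
  show "graph_extend G z c \<subseteq> S \<times> UNIV"
    using norm_dominated_graph_subset[OF G] S
    by (auto simp: graph_extend_def subspace_add subspace_scale)
next
  fix a b a' b'
  assume "(a, b) \<in> graph_extend G z c" "(a', b') \<in> graph_extend G z c"
  then obtain a1 b1 t a2 b2 t' where "(a1, b1) \<in> G" "(a2, b2) \<in> G"
    "a = a1 + t *\<^sub>R z" "b = b1 + t * c" "a' = a2 + t' *\<^sub>R z" "b' = b2 + t' * c"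
    unfolding graph_extend_def by blast
  moreover have "(a + a', b + b') = ((a1 + a2) + (t + t') *\<^sub>R z, (b1 + b2) + (t + t') * c)"
    using calculation by (simp add: algebra_simps)
  ultimately show "(a + a', b + b') \<in> graph_extend G z c"
    unfolding graph_extend_def using norm_dominated_graph_add[OF G] by blast
next
  fix r a b
  assume "(a, b) \<in> graph_extend G z c"
  then obtain a1 b1 t where "(a1, b1) \<in> G" "a = a1 + t *\<^sub>R z" "b = b1 + t * c"
    unfolding graph_extend_def by blast
  moreover have "(r *\<^sub>R a, r * b) = (r *\<^sub>R a1 + (r * t) *\<^sub>R z, r * b1 + (r * t) * c)"
    using calculation by (simp add: algebra_simps)
  ultimately show "(r *\<^sub>R a, r * b) \<in> graph_extend G z c"
    unfolding graph_extend_def using norm_dominated_graph_scale[OF G] by blast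
next
  fix a b
  assume "(a, b) \<in> graph_extend G z c"
  then obtain a1 b1 t where ab1: "(a1, b1) \<in> G" and ab: "a = a1 + t *\<^sub>R z" "b = b1 + t * c"
    unfolding graph_extend_def by blast
  consider "t = 0" | "t > 0" | "t < 0" by linarith
  then show "b \<le> norm a"
  proof cases
    case 1
    then show ?thesis using ab ab1 norm_dominated_graph_le_norm[OF G] by simp
  next
    case 2
    have "c \<le> norm ((1 / t) *\<^sub>R a1 + z) - (1 / t) * b1"
      by (rule upper[OF norm_dominated_graph_scale[OF G ab1]])
    then have "t * c \<le> t * norm ((1 / t) *\<^sub>R a1 + z) - b1"
      using 2 by (simp add: field_simps)
    also have "t * norm ((1 / t) *\<^sub>R a1 + z) = norm (t *\<^sub>R ((1 / t) *\<^sub>R a1 + z))"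
      using 2 by simp
    also have "t *\<^sub>R ((1 / t) *\<^sub>R a1 + z) = a" using 2 ab by (simp add: algebra_simps)
    finally show ?thesis using ab by simp
  next
    case 3
    have "(- 1 / t) * b1 - norm ((- 1 / t) *\<^sub>R a1 - z) \<le> c"
      by (rule lower[OF norm_dominated_graph_scale[OF G ab1]])
    then have "b1 - (- t) * norm ((- 1 / t) *\<^sub>R a1 - z) \<le> - t * c"
      using 3 by (simp add: field_simps)
    also have "(- t) * norm ((- 1 / t) *\<^sub>R a1 - z) = norm ((- t) *\<^sub>R ((- 1 / t) *\<^sub>R a1 - z))"
      using 3 by simp
    also have "(- t) *\<^sub>R ((- 1 / t) *\<^sub>R a1 - z) = a" using 3 ab by (simp add: algebra_simps)
    finally show ?thesis using ab by simp
  qed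
qed

lemma norm_dominated_graph_Union:
  assumes chain: "\<And>X Y. X \<in> C \<Longrightarrow> Y \<in> C \<Longrightarrow> X \<subseteq> Y \<or> Y \<subseteq> X"
    and dom: "\<And>X. X \<in> C \<Longrightarrow> norm_dominated_graph S X"
  shows "norm_dominated_graph S (\<Union>C)"
  unfolding norm_dominated_graph_def
proof (intro conjI allI impI)
  fix a b c d
  assume "(a, b) \<in> \<Union>C" "(c, d) \<in> \<Union>C"
  then obtain X Y where "X \<in> C" "Y \<in> C" "(a, b) \<in> X" "(c, d) \<in> Y" by blast
  with chain have "\<exists>Z\<in>C. (a, b) \<in> Z \<and> (c, d) \<in> Z" by blast
  then show "(a + c, b + d) \<in> \<Union>C" using dom norm_dominated_graph_add by blast
qed (use dom norm_dominated_graph_subset norm_dominated_graph_scale norm_dominated_graph_le_norm in blast)+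

text \<open>Hahn-Banach, via Zorn's lemma on the norm-dominated graphs through \<open>(x, \<parallel>x\<parallel>)\<close>:
  a maximal one is defined on all of \<open>S\<close>, since otherwise it has a proper extension.\<close>
lemma real_norming_functional:
  fixes S :: "'v::real_normed_vector set"
  assumes S: "subspace S" and x: "x \<in> S"
  shows "\<exists>u\<in>dual_ball scaleR S. u x = norm x"
proof -
  define A where "A = {G. norm_dominated_graph S G \<and> (x, norm x) \<in> G}"
  have zero_graph: "norm_dominated_graph S {(0, 0)}"
    using subspace_0[OF S] by (simp add: norm_dominated_graph_def)
  have "graph_extend {(0, 0)} x (norm x) \<in> A"
  proof -
    have "(x, norm x) \<in> graph_extend {(0, 0)} x (norm x)"
      unfolding graph_extend_def by (auto intro!: exI[of _ 1])
    then show ?thesis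
      unfolding A_def using norm_dominated_graph_extend[OF zero_graph S x] by simp
  qed
  then have "A \<noteq> {}" by blast
  moreover have "\<Union>C \<in> A" if "C \<noteq> {}" "subset.chain A C" for C
    using that norm_dominated_graph_Union[of C S] unfolding A_def subset_chain_def by blast
  ultimately obtain M where "M \<in> A" and max: "\<And>X. X \<in> A \<Longrightarrow> M \<subseteq> X \<Longrightarrow> X = M"
    using subset_Zorn_nonempty[of A] by blast
  then have M: "norm_dominated_graph S M" and xM: "(x, norm x) \<in> M" by (auto simp: A_def)
  have total: "\<exists>b. (z, b) \<in> M" if z: "z \<in> S" for z
  proof -
    obtain c where lower: "\<And>a b. (a, b) \<in> M \<Longrightarrow> b - norm (a - z) \<le> c"
      and upper: "\<And>a b. (a, b) \<in> M \<Longrightarrow> c \<le> norm (a + z) - b"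
      using norm_dominated_graph_extension_value[OF M] xM by blast
    have ext: "norm_dominated_graph S (graph_extend M z c)"
      by (rule norm_dominated_graph_extend[OF M S z lower upper])
    have "(a, b) \<in> graph_extend M z c" if "(a, b) \<in> M" for a b
      using that unfolding graph_extend_def by force
    then have "M \<subseteq> graph_extend M z c" by auto
    with ext xM max[of "graph_extend M z c"] have "graph_extend M z c = M"
      by (auto simp: A_def)
    moreover have "(z, c) \<in> graph_extend M z c"
      using norm_dominated_graph_zero[OF M xM] unfolding graph_extend_def by force
    ultimately show ?thesis by blast
  qed
  define u where "u y = (SOME b. (y, b) \<in> M)" for y
  have uM: "(y, u y) \<in> M" if "y \<in> S" for y
    unfolding u_def using total[OF that] by (rule someI_ex)
  have "u (a + b) = u a + u b" if "a \<in> S" "b \<in> S" for a b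
    using norm_dominated_graph_unique[OF M uM norm_dominated_graph_add[OF M uM uM]]
      that subspace_add[OF S] by blast
  moreover have "u (r *\<^sub>R a) = r * u a" if "a \<in> S" for r a
    using norm_dominated_graph_unique[OF M uM norm_dominated_graph_scale[OF M uM]]
      that subspace_scale[OF S] by blast
  moreover have "\<bar>u a\<bar> \<le> norm a" if "a \<in> S" for a
    using norm_dominated_graph_le_norm[OF M uM[OF that]]
      norm_dominated_graph_le_norm[OF M norm_dominated_graph_scale[OF M uM[OF that]], of "-1"]
    by simp
  moreover have "u x = norm x" using norm_dominated_graph_unique[OF M uM[OF x] xM] .
  ultimately have "u \<in> dual_ball scaleR S" "u x = norm x" unfolding dual_ball_def by auto
  then show ?thesis by blast
qed

lemma K_scaling_scaleR: "K_scaling (scaleR :: real \<Rightarrow> 'v::real_normed_vector \<Rightarrow> 'v)"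
  by (simp add: K_scaling_def scaleR_add_left scaleR_add_right)

lemma K_subspace_imp_subspace:
  assumes "K_scaling sc" "K_subspace sc S"
  shows "subspace S"
proof (rule subspaceI)
  fix c x assume "x \<in> S"
  then have "sc (of_real c) x \<in> S" using assms(2) by (simp add: K_subspace_def)
  then show "c *\<^sub>R x \<in> S" using assms(1) by (simp add: K_scaling_def)
qed (use assms(2) in \<open>simp_all add: K_subspace_def\<close>)

lemma K_scaling_complex_decompose:
  fixes sc :: "complex \<Rightarrow> 'v::real_normed_vector \<Rightarrow> 'v"
  assumes "K_scaling sc"
  shows "sc a y = Re a *\<^sub>R y + Im a *\<^sub>R sc \<i> y"
proof -
  have "sc a y = sc (of_real (Re a) + of_real (Im a) * \<i>) y"
    by (rule arg_cong[where f = "\<lambda>b. sc b y"]) (simp add: complex_eq_iff)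
  also have "\<dots> = Re a *\<^sub>R y + Im a *\<^sub>R sc \<i> y"
    using assms by (simp add: K_scaling_def)
  finally show ?thesis .
qed

definition dual_norming :: "('k::real_normed_field \<Rightarrow> 'v::real_normed_vector \<Rightarrow> 'v) \<Rightarrow> 'v set \<Rightarrow> bool" where
  "dual_norming sc S \<longleftrightarrow> (\<forall>y\<in>S. \<exists>\<phi>\<in>dual_ball sc S. norm (\<phi> y) = norm y)"

lemma dual_norming_real:
  fixes S :: "'v::real_normed_vector set"
  assumes "subspace S"
  shows "dual_norming scaleR S"
  unfolding dual_norming_def
proof
  fix y assume "y \<in> S"
  with real_norming_functional[OF assms]
  obtain u where "u \<in> dual_ball scaleR S" "u y = norm y" by blast
  then show "\<exists>\<phi>\<in>dual_ball scaleR S. norm (\<phi> y) = norm y" by force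
qed

lemma dual_norming_complex:
  fixes sc :: "complex \<Rightarrow> 'v::real_normed_vector \<Rightarrow> 'v"
  assumes sc: "K_scaling sc" and S: "K_subspace sc S"
  shows "dual_norming sc S"
  unfolding dual_norming_def
proof
  fix y assume y: "y \<in> S"
  have S_real: "subspace S" by (rule K_subspace_imp_subspace[OF sc S])
  have sc_closed: "sc a w \<in> S" if "w \<in> S" for a w
    using S that by (simp add: K_subspace_def)
  have sc_add: "sc a (v + w) = sc a v + sc a w"
    and sc_mult: "sc (a * b) w = sc a (sc b w)" and sc_norm: "norm (sc a w) = norm a * norm w"
    for a b v w using sc by (simp_all add: K_scaling_def)
  obtain u where "u \<in> dual_ball scaleR S" and u_y: "u y = norm y"
    using real_norming_functional[OF S_real y] by blast
  then have u_add: "\<And>v w. v \<in> S \<Longrightarrow> w \<in> S \<Longrightarrow> u (v + w) = u v + u w"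
    and u_scale: "\<And>r w. w \<in> S \<Longrightarrow> u (r *\<^sub>R w) = r * u w"
    and u_bound: "\<And>w. w \<in> S \<Longrightarrow> \<bar>u w\<bar> \<le> norm w"
    by (auto simp: dual_ball_def)
  have u_sc: "u (sc a w) = Re a * u w + Im a * u (sc \<i> w)" if "w \<in> S" for a w
    using that sc_closed[OF that] K_scaling_complex_decompose[OF sc, of a w]
    by (simp add: u_add u_scale subspace_scale[OF S_real])
  define \<phi> where "\<phi> w = of_real (u w) - \<i> * of_real (u (sc \<i> w))" for w
  have Re_\<phi>: "Re (\<phi> w) = u w" for w by (simp add: \<phi>_def)
  have \<phi>_add: "\<phi> (v + w) = \<phi> v + \<phi> w" if "v \<in> S" "w \<in> S" for v w
    using that sc_closed by (simp add: \<phi>_def sc_add u_add algebra_simps)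
  have \<phi>_sc: "\<phi> (sc a w) = a * \<phi> w" if w: "w \<in> S" for a w
  proof -
    have "u (sc \<i> (sc a w)) = u (sc (\<i> * a) w)" by (simp add: sc_mult)
    also have "\<dots> = Re a * u (sc \<i> w) - Im a * u w" using u_sc[OF w, of "\<i> * a"] by simp
    finally show ?thesis using u_sc[OF w, of a]
      by (simp add: \<phi>_def complex_eq_iff algebra_simps)
  qed
  have \<phi>_bound: "norm (\<phi> w) \<le> norm w" if w: "w \<in> S" for w
  proof (cases "\<phi> w = 0")
    case False
    define \<beta> where "\<beta> = cnj (\<phi> w) / of_real (cmod (\<phi> w))"
    have "\<phi> (sc \<beta> w) = \<beta> * \<phi> w" by (rule \<phi>_sc[OF w])
    also have "\<dots> = of_real ((cmod (\<phi> w))\<^sup>2) / of_real (cmod (\<phi> w))"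
      unfolding complex_norm_square by (simp add: \<beta>_def)
    also have "\<dots> = of_real (cmod (\<phi> w))" using False by (simp add: power2_eq_square)
    finally have "cmod (\<phi> w) = u (sc \<beta> w)" using Re_\<phi>[of "sc \<beta> w"] by simp
    also have "\<dots> \<le> norm (sc \<beta> w)" using u_bound[OF sc_closed[OF w, of \<beta>]] by simp
    also have "\<dots> = norm w" using False by (simp add: sc_norm \<beta>_def norm_divide)
    finally show ?thesis .
  qed simp
  have "\<phi> \<in> dual_ball sc S" using \<phi>_add \<phi>_sc \<phi>_bound by (simp add: dual_ball_def)
  moreover have "norm (\<phi> y) = norm y"
    using abs_Re_le_cmod[of "\<phi> y"] \<phi>_bound[OF y] u_y Re_\<phi>[of y] by simp
  ultimately show "\<exists>\<phi>\<in>dual_ball sc S. norm (\<phi> y) = norm y" by blast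
qed

lemma norm_le_weak_norm:
  fixes sc :: "'k::real_normed_field \<Rightarrow> 'v::real_normed_vector \<Rightarrow> 'v"
  assumes norming: "dual_norming sc S" and x: "\<forall>j\<in>{1..n}. x j \<in> S"
    and k: "k \<in> {1..n}" and q: "q > 0"
  shows "norm (x k) \<le> weak_norm sc S q n x"
proof -
  define f where "f \<psi> = (\<Sum>j\<in>{1..n}. norm (\<psi> (x j)) powr q) powr (1 / q)" for \<psi> :: "'v \<Rightarrow> 'k"
  obtain \<phi> where \<phi>: "\<phi> \<in> dual_ball sc S" "norm (\<phi> (x k)) = norm (x k)"
    using norming x k unfolding dual_norming_def by blast
  have "f \<psi> \<le> (\<Sum>j\<in>{1..n}. norm (x j) powr q) powr (1 / q)" if "\<psi> \<in> dual_ball sc S" for \<psi>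
    unfolding f_def using that x q
    by (intro powr_mono2 sum_mono sum_nonneg) (auto simp: dual_ball_def)
  then have bdd: "bdd_above (f ` dual_ball sc S)" by (rule bdd_aboveI2)
  have "norm (x k) = (norm (\<phi> (x k)) powr q) powr (1 / q)"
    using q \<phi>(2) by (simp add: powr_powr)
  also have "\<dots> \<le> f \<phi>" unfolding f_def using q k
    by (intro powr_mono2) (auto intro!: member_le_sum[where f="\<lambda>j. norm (\<phi> (x j)) powr q"])
  also have "\<dots> \<le> weak_norm sc S q n x" unfolding weak_norm_def f_def[symmetric]
    by (rule cSUP_upper[OF \<phi>(1) bdd])
  finally show ?thesis .
qed

lemma mult_bounded_nonneg_constant:
  assumes "mult_bounded scE scF m S T"
  obtains C where "C \<ge> 0"
    and "\<And>x. \<forall>j<m. x j \<in> S j \<Longrightarrow> norm (T (args m x)) \<le> C * (\<Prod>j<m. norm (x j))"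
proof -
  obtain C where C: "\<And>x. \<forall>j<m. x j \<in> S j \<Longrightarrow> norm (T (args m x)) \<le> C * (\<Prod>j<m. norm (x j))"
    using assms unfolding mult_bounded_def by blast
  show thesis
  proof (rule that)
    fix x assume "\<forall>j<m. x j \<in> S j"
    then have "norm (T (args m x)) \<le> C * (\<Prod>j<m. norm (x j))" by (rule C)
    also have "\<dots> \<le> max C 0 * (\<Prod>j<m. norm (x j))" by (intro mult_right_mono prod_nonneg) auto
    finally show "norm (T (args m x)) \<le> max C 0 * (\<Prod>j<m. norm (x j))" .
  qed simp
qed

lemma mult_index_le:
  fixes scE :: "'k::real_normed_field \<Rightarrow> 'e::real_normed_vector \<Rightarrow> 'e"
    and scF :: "'k \<Rightarrow> 'f::real_normed_vector \<Rightarrow> 'f"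
  assumes norming: "\<forall>i<m. dual_norming scE (S i)" and p: "p > 0" and s: "real m / p \<le> s"
  shows "mult_index scE scF m S p p \<le> ereal s"
  unfolding mult_index_def
proof (rule Inf_lower, rule imageI, safe)
  fix T assume "mult_bounded scE scF m S T"
  then obtain C where C0: "C \<ge> 0"
    and C: "\<And>x. \<forall>j<m. x j \<in> S j \<Longrightarrow> norm (T (args m x)) \<le> C * (\<Prod>j<m. norm (x j))"
    by (elim mult_bounded_nonneg_constant) blast
  show "\<exists>C\<ge>0. \<forall>n\<ge>1. \<forall>x. (\<forall>i<m. \<forall>k\<in>{1..n}. x i k \<in> S i) \<longrightarrow>
        (\<Sum>k\<in>PiE {..<m} (\<lambda>_. {1..n}). norm (T (args m (\<lambda>i. x i (k i)))) powr p) powr (1 / p)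
          \<le> C * real n powr s * (\<Prod>i<m. weak_norm scE (S i) p n (x i))"
  proof (intro exI[of _ C] conjI allI impI C0)
    fix n :: nat and x :: "nat \<Rightarrow> nat \<Rightarrow> 'e"
    assume n: "1 \<le> n" and x: "\<forall>i<m. \<forall>k\<in>{1..n}. x i k \<in> S i"
    define K where "K = PiE {..<m} (\<lambda>_. {1..n})"
    define Q where "Q = C * (\<Prod>i<m. weak_norm scE (S i) p n (x i))"
    have weak: "norm (x i k) \<le> weak_norm scE (S i) p n (x i)" if "i < m" "k \<in> {1..n}" for i k
      using that x norming p by (intro norm_le_weak_norm) auto
    have "weak_norm scE (S i) p n (x i) \<ge> 0" if "i < m" for i
      using order_trans[OF norm_ge_zero weak[OF that, of 1]] n by simp
    then have "Q \<ge> 0" unfolding Q_def using C0 by (intro mult_nonneg_nonneg prod_nonneg) auto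
    have summand: "norm (T (args m (\<lambda>i. x i (k i)))) powr p \<le> Q powr p" if "k \<in> K" for k
    proof -
      have k: "k i \<in> {1..n}" if "i < m" for i using \<open>k \<in> K\<close> that by (auto simp: K_def PiE_iff)
      have "\<forall>i<m. x i (k i) \<in> S i" using x k by blast
      then have "norm (T (args m (\<lambda>i. x i (k i)))) \<le> C * (\<Prod>i<m. norm (x i (k i)))"
        by (rule C)
      also have "\<dots> \<le> Q" unfolding Q_def using C0 weak k by (intro mult_left_mono prod_mono) auto
      finally show ?thesis using p by (intro powr_mono2) auto
    qed
    have "(\<Sum>k\<in>K. norm (T (args m (\<lambda>i. x i (k i)))) powr p) \<le> (\<Sum>k\<in>K. Q powr p)"
      by (rule sum_mono[OF summand])
    also have "\<dots> = real n powr real m * Q powr p"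
      using n by (simp add: K_def card_PiE powr_realpow)
    finally have "(\<Sum>k\<in>K. norm (T (args m (\<lambda>i. x i (k i)))) powr p) powr (1 / p)
        \<le> (real n powr real m * Q powr p) powr (1 / p)"
      using p by (intro powr_mono2) (auto intro: sum_nonneg)
    also have "\<dots> = real n powr (real m / p) * Q" using p \<open>Q \<ge> 0\<close> by (simp add: powr_mult powr_powr)
    also have "\<dots> \<le> real n powr s * Q" using s n \<open>Q \<ge> 0\<close> by (intro mult_right_mono powr_mono) auto
    finally show "(\<Sum>k\<in>PiE {..<m} (\<lambda>_. {1..n}). norm (T (args m (\<lambda>i. x i (k i)))) powr p) powr (1 / p)
        \<le> C * real n powr s * (\<Prod>i<m. weak_norm scE (S i) p n (x i))"
      by (simp add: K_def Q_def mult_ac)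
  qed
qed

lemma mult_index_pp_bounds:
  assumes "\<forall>i<m. dual_norming scE (S i)" and p: "0 < p"
  shows "(p \<le> 2 \<longrightarrow> mult_index scE scF m S p p \<le> ereal (real m / p)) \<and>
    (2 \<le> p \<longrightarrow> mult_index scE scF m S p p \<le> ereal (real m / 2))"
proof (intro conjI impI)
  show "mult_index scE scF m S p p \<le> ereal (real m / p)"
    by (rule mult_index_le[OF assms]) simp
  show "mult_index scE scF m S p p \<le> ereal (real m / 2)" if "2 \<le> p"
    using that by (intro mult_index_le[OF assms] divide_left_mono) auto
qed

theorem mainTheorem2:
  fixes p :: real and m :: nat
  assumes "0 < p" and "1 \<le> m"
  shows
    "(\<forall>S :: nat \<Rightarrow> 'e::banach set.
        (\<forall>i<m. K_subspace (scaleR :: real \<Rightarrow> 'e \<Rightarrow> 'e) (S i)) \<longrightarrow>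
          (p \<le> 2 \<longrightarrow> mult_index scaleR (scaleR :: real \<Rightarrow> 'f::banach \<Rightarrow> 'f) m S p p \<le> ereal (real m / p)) \<and>
          (2 \<le> p \<longrightarrow> mult_index scaleR (scaleR :: real \<Rightarrow> 'f \<Rightarrow> 'f) m S p p \<le> ereal (real m / 2)))
     \<and>
     (\<forall>(scE :: complex \<Rightarrow> 'e \<Rightarrow> 'e) (scF :: complex \<Rightarrow> 'f \<Rightarrow> 'f) S.
        K_scaling scE \<and> K_scaling scF \<and> (\<forall>i<m. K_subspace scE (S i)) \<longrightarrow>
          (p \<le> 2 \<longrightarrow> mult_index scE scF m S p p \<le> ereal (real m / p)) \<and>
          (2 \<le> p \<longrightarrow> mult_index scE scF m S p p \<le> ereal (real m / 2)))"
proof (intro conjI allI impI)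
  fix S :: "nat \<Rightarrow> 'e set"
  assume "\<forall>i<m. K_subspace (scaleR :: real \<Rightarrow> 'e \<Rightarrow> 'e) (S i)"
  then have norming: "\<forall>i<m. dual_norming scaleR (S i)" by (simp add: dual_norming_real K_subspace_imp_subspace[OF K_scaling_scaleR])
  show "p \<le> 2 \<Longrightarrow> mult_index scaleR (scaleR :: real \<Rightarrow> 'f \<Rightarrow> 'f) m S p p \<le> ereal (real m / p)"
    and "2 \<le> p \<Longrightarrow> mult_index scaleR (scaleR :: real \<Rightarrow> 'f \<Rightarrow> 'f) m S p p \<le> ereal (real m / 2)"
    using mult_index_pp_bounds[OF norming assms(1)] by blast+
next
  fix scE :: "complex \<Rightarrow> 'e \<Rightarrow> 'e" and scF :: "complex \<Rightarrow> 'f \<Rightarrow> 'f" and S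
  assume "K_scaling scE \<and> K_scaling scF \<and> (\<forall>i<m. K_subspace scE (S i))"
  then have norming: "\<forall>i<m. dual_norming scE (S i)" by (simp add: dual_norming_complex)
  show "p \<le> 2 \<Longrightarrow> mult_index scE scF m S p p \<le> ereal (real m / p)"
    and "2 \<le> p \<Longrightarrow> mult_index scE scF m S p p \<le> ereal (real m / 2)"
    using mult_index_pp_bounds[OF norming assms(1)] by blast+
qed

end
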